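(* Let $T$ be a rooted binary tree whose leaves are each coloured black or white, with the colouring extended to all nodes as described in the context, and assume that $T$ contains more than one maximal black subtree. If there exists an SPR operation $(u,v)$ on $T$ whose resulting tree contains at most one maximal black subtree (i.e. the resulting tree is compatible with the data), then that operation belongs to one of the classes $(\mathrm{B},\mathrm{r},\mathrm{B},\ast)$, $(\mathrm{W},\mathrm{r},\mathrm{W},\ast)$, $(\mathrm{W},\mathrm{r},\mathrm{G},\ast)$ or $(\mathrm{W},\mathrm{r},\mathrm{B},\mathrm{r})$.
   Context: All trees are rooted binary trees; every non-leaf node has exactly two children and every non-root node $n$ has a parent $\mathrm{pa}(n)$. A "subtree" always means a node together with all of its descendants (so its leaves are leaves of the original tree). Colouring: each leaf is coloured black (B) or white (W) (in the application, black iff the corresponding observed sequence carries allele 1 at the next segregating site). The colouring is extended recursively to all nodes: an internal node is black if both children are black, white if both children are white, and grey (G) otherwise. A subtree is black (resp. white) if all its nodes are black (resp. white); it is maximal if no strictly larger subtree containing it is black (resp. white). Classification: a black or white node is of type "r" (subtree root) if it is the root of a maximal subtree of its own colour, and of type "b" (branch) otherwise; all grey nodes are of type "b" by convention. A tree is called compatible (with the data) if it contains at most one maximal black subtree. SPR operation $(u,v)$ on $T$: $u$ is a non-root node, $v$ is a node of $T$ with $v\notin\{u,\mathrm{pa}(u)\}$ and $v$ not a descendant of $u$; the subtree rooted at $u$ is pruned (the edge to $u$ is removed and $\mathrm{pa}(u)$ is deleted, its other child taking its place), and then regrafted onto the branch above $v$: a new node is inserted on the edge from $v$ to its parent (or as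 a new root above $v$ if $v$ is the root) whose two children are $v$ and $u$. Colours of the resulting tree are recomputed by the same rule. The SPR operation $(u,v)$ belongs to the equivalence class $(x,y,z,w)$ where $x,z\in\{\mathrm{B},\mathrm{W},\mathrm{G}\}$ are the colours in $T$ of the pruned node $u$ and regrafting node $v$, and $y,w\in\{\mathrm{r},\mathrm{b}\}$ are their respective classifications in $T$; $\ast$ is a wildcard standing for any value. *)

theory Defs
  imports Main "HOL-Library.Sublist"
begin

text \<open>Rooted binary trees; leaves carry their colour (True = black, False = white).
Nodes are addressed by positions: paths from the root (False = left child, True = right child).\<close>

datatype tree = Leaf bool | Node tree tree

datatype colour = B | W | G

datatype kind = R | Br

fun col :: "tree \<Rightarrow> colour" where
  "col (Leaf c) = (if c then B else W)"
| "col (Node l r) =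
     (if col l = B \<and> col r = B then B else if col l = W \<and> col r = W then W else G)"

fun positions :: "tree \<Rightarrow> bool list set" where
  "positions (Leaf _) = {[]}"
| "positions (Node l r) = insert [] (Cons False ` positions l \<union> Cons True ` positions r)"

fun sub :: "tree \<Rightarrow> bool list \<Rightarrow> tree" where
  "sub t [] = t"
| "sub (Node l r) (b # p) = sub (if b then r else l) p"
| "sub (Leaf c) (_ # _) = Leaf c"

fun repl :: "tree \<Rightarrow> bool list \<Rightarrow> tree \<Rightarrow> tree" where
  "repl t [] s = s"
| "repl (Node l r) (b # p) s = (if b then Node l (repl r p s) else Node (repl l p s) r)"
| "repl (Leaf c) (_ # _) s = Leaf c"

text \<open>Classification: a black/white node is of type r iff it roots a maximal subtree of its
colour, i.e. no strictly larger subtree containing it (= subtree at a proper ancestor) has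
the same colour; grey nodes are of type b.\<close>
definition kind_of :: "tree \<Rightarrow> bool list \<Rightarrow> kind" where
  "kind_of t p = (if col (sub t p) \<noteq> G \<and>
                    (\<forall>q. strict_prefix q p \<longrightarrow> col (sub t q) \<noteq> col (sub t p))
                  then R else Br)"

definition max_black :: "tree \<Rightarrow> bool list set" where
  "max_black t = {p \<in> positions t. col (sub t p) = B \<and> kind_of t p = R}"

definition compatible :: "tree \<Rightarrow> bool" where
  "compatible t \<longleftrightarrow> card (max_black t) \<le> 1"

definition spr_valid :: "tree \<Rightarrow> bool list \<Rightarrow> bool list \<Rightarrow> bool" where
  "spr_valid t u v \<longleftrightarrow> u \<in> positions t \<and> u \<noteq> [] \<and> v \<in> positions t \<and>
     v \<noteq> butlast u \<and> \<not> prefix u v"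

definition prune :: "tree \<Rightarrow> bool list \<Rightarrow> tree" where
  "prune t u = repl t (butlast u) (sub t (butlast u @ [\<not> last u]))"

text \<open>Position of node v in the pruned tree.\<close>
definition shift :: "bool list \<Rightarrow> bool list \<Rightarrow> bool list" where
  "shift u v = (if prefix (butlast u @ [\<not> last u]) v then butlast u @ drop (length u) v else v)"

text \<open>Regraft the pruned subtree onto the branch above v.\<close>
definition spr :: "tree \<Rightarrow> bool list \<Rightarrow> bool list \<Rightarrow> tree" where
  "spr t u v = (let t' = prune t u; v' = shift u v in repl t' v' (Node (sub t' v') (sub t u)))"

definition spr_class :: "tree \<Rightarrow> bool list \<Rightarrow> bool list \<Rightarrow> colour \<times> kind \<times> colour \<times> kind" where
  "spr_class t u v = (col (sub t u), kind_of t u, col (sub t v), kind_of t v)"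

end

theory Submission imports Defs begin

text \<open>
  Write black_count t for the number of maximal black subtrees of t: a black node counts once,
  otherwise the counts of the two children add up. A non-black subtree plugged into a context
  adds its count to that of the context, and grafting a subtree next to a node never decreases
  the count. So if u is regrafted beside the subtree x at v and Node x u is not black, the new
  tree has at least as many maximal black subtrees as the pruned tree and u together. Unless u
  is white, compatibility then forces the pruned tree to be white, which puts all maximal black
  subtrees of T, at least two, inside u: a contradiction. Hence u is white, or u and x are black.
  The node u is a subtree root, since otherwise pruning it leaves the count unchanged. Finally,
  if u is white and v black but not a root, the black parent of v turns grey after the regraft
  and carries two maximal black subtrees, so v must be a root.
\<close>

fun black_count :: "tree \<Rightarrow> nat" where
  "black_count (Leaf c) = (if c then 1 else 0)"
| "black_count (Node l r) =
     (if col l = B \<and> col r = B then 1 else black_count l + black_count r)"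

lemma black_count_eq_0_iff: "black_count t = 0 \<longleftrightarrow> col t = W"
  and black_count_black: "col t = B \<Longrightarrow> black_count t = 1"
  by (induction t) (auto split: if_splits)

lemma black_count_Node_le: "black_count (Node l r) \<le> black_count l + black_count r"
  using black_count_black by auto

lemma max_black_Leaf: "max_black (Leaf c) = (if c then {[]} else {})"
  by (auto simp: max_black_def kind_of_def)

lemma max_black_Node_black: "col (Node l r) = B \<Longrightarrow> max_black (Node l r) = {[]}"
  by (auto simp: max_black_def kind_of_def simp del: col.simps dest!: spec[of _ "[]"])

lemma all_strict_prefix_Cons:
  "(\<forall>q. strict_prefix q (c # p) \<longrightarrow> P q) \<longleftrightarrow> P [] \<and> (\<forall>q. strict_prefix q p \<longrightarrow> P (c # q))"
  by (auto simp: strict_prefix_def) (metis prefix_Cons)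

lemma max_black_Node_nonblack: "col (Node l r) \<noteq> B \<Longrightarrow>
   max_black (Node l r) = Cons False ` max_black l \<union> Cons True ` max_black r"
  by (rule set_eqI, case_tac x)
     (auto simp: max_black_def kind_of_def all_strict_prefix_Cons simp del: col.simps)

lemma finite_max_black: "finite (max_black t)"
proof -
  have "finite (positions t)" by (induction t) auto
  then show ?thesis unfolding max_black_def by auto
qed

lemma card_max_black: "card (max_black t) = black_count t"
proof (induction t)
  case (Leaf c)
  then show ?case by (simp add: max_black_Leaf)
next
  case (Node l r)
  show ?case
  proof (cases "col (Node l r) = B")
    case True
    then show ?thesis by (simp only: max_black_Node_black) (auto split: if_splits)
  next
    case False
    have "card (Cons False ` max_black l \<union> Cons True ` max_black r)
        = card (max_black l) + card (max_black r)"
      by (subst card_Un_disjoint) (auto simp: finite_max_black card_image)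
    with False Node show ?thesis by (auto simp: max_black_Node_nonblack split: if_splits)
  qed
qed

lemma Nil_in_positions [simp]: "[] \<in> positions t"
  by (cases t) auto

lemma sub_append: "sub t (p @ q) = sub (sub t p) q"
  by (induction t p rule: sub.induct) (auto, cases q, auto)

lemma positions_append: "p @ q \<in> positions t \<longleftrightarrow> p \<in> positions t \<and> q \<in> positions (sub t p)"
proof (induction p arbitrary: t)
  case (Cons c p)
  then show ?case by (cases t) auto
qed simp

lemma repl_sub_id [simp]: "repl t p (sub t p) = t"
  by (induction t p rule: sub.induct) auto

lemma sub_repl_append: "p \<in> positions t \<Longrightarrow> sub (repl t p x) (p @ q) = sub x q"
proof (induction p arbitrary: t)
  case (Cons c p)
  then show ?case by (cases t) auto
qed simp

lemma positions_repl_append: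
  "p \<in> positions t \<Longrightarrow> p @ q \<in> positions (repl t p x) \<longleftrightarrow> q \<in> positions x"
proof (induction p arbitrary: t)
  case (Cons c p)
  then show ?case by (cases t) auto
qed simp

lemma sub_repl_prefix: "p @ q \<in> positions t \<Longrightarrow> sub (repl t (p @ q) x) p = repl (sub t p) q x"
proof (induction p arbitrary: t)
  case (Cons c p)
  then show ?case by (cases t) auto
qed simp

lemma sub_repl_disjoint:
  "\<not> prefix p q \<Longrightarrow> \<not> prefix q p \<Longrightarrow> sub (repl t p x) q = sub t q"
proof (induction t p x arbitrary: q rule: repl.induct)
  case (2 l r c p x)
  then obtain d q' where "q = d # q'" by (cases q) auto
  with 2 show ?case by (cases "c = d") auto
qed auto

lemma positions_repl_disjoint:
  "\<not> prefix p q \<Longrightarrow> \<not> prefix q p \<Longrightarrow> q \<in> positions (repl t p x) \<longleftrightarrow> q \<in> positions t"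
proof (induction t p x arbitrary: q rule: repl.induct)
  case (2 l r c p x)
  then obtain d q' where "q = d # q'" by (cases q) auto
  with 2 show ?case by (cases "c = d") auto
qed auto

lemma col_sub_eq: "col t \<noteq> G \<Longrightarrow> col (sub t p) = col t"
  by (induction t p rule: sub.induct) (auto split: if_splits)

lemma sub_parent:
  assumes "a @ [b] \<in> positions t"
  obtains l r where "sub t a = Node l r"
    and "sub t (a @ [b]) = (if b then r else l)" and "sub t (a @ [\<not> b]) = (if b then l else r)"
  using assms by (cases "sub t a") (auto simp: positions_append sub_append)

lemma black_count_sub_le: "black_count (sub t p) \<le> black_count t"
proof (induction t p rule: sub.induct)
  case (2 l r c p)
  then show ?case
    using col_sub_eq[of "Node l r" "c # p"] black_count_black by (auto split: if_splits)
qed auto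

lemma repl_cong_col_black_count:
  "col x = col y \<Longrightarrow> black_count x = black_count y \<Longrightarrow>
   col (repl t p x) = col (repl t p y) \<and> black_count (repl t p x) = black_count (repl t p y)"
  by (induction t p x rule: repl.induct) auto

lemma col_repl_nonblack: "p \<in> positions t \<Longrightarrow> col y \<noteq> B \<Longrightarrow> col (repl t p y) \<noteq> B"
proof (induction p arbitrary: t)
  case (Cons c p)
  then show ?case by (cases t) auto
qed simp

lemma black_count_repl_le: "p \<in> positions t \<Longrightarrow>
   black_count (repl t p y) \<le> black_count y + black_count (repl t p (Leaf False))"
proof (induction p arbitrary: t)
  case (Cons c p)
  then obtain l r where "t = Node l r" by (cases t) auto
  with Cons show ?case
    using col_repl_nonblack[of p _ "Leaf False"] black_count_Node_le black_count_black
    by (cases c) fastforce+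
qed simp

text \<open>A non-black subtree never merges with its context into a black node, so its count
  adds to that of the context, i.e. of the tree with that subtree whitened.\<close>
lemma black_count_repl_nonblack: "p \<in> positions t \<Longrightarrow> col y \<noteq> B \<Longrightarrow>
   black_count (repl t p y) = black_count y + black_count (repl t p (Leaf False))"
proof (induction p arbitrary: t)
  case (Cons c p)
  then obtain l r where "t = Node l r" by (cases t) auto
  with Cons show ?case
    using col_repl_nonblack[of p _ y] col_repl_nonblack[of p _ "Leaf False"] by (cases c) auto
qed (simp add: black_count_eq_0_iff)

lemma black_count_le_graft:
  assumes "p \<in> positions t"
  shows "black_count t \<le> black_count (repl t p (Node (sub t p) y))"
proof (cases "col (Node (sub t p) y) = B")
  case True
  then have "col (Node (sub t p) y) = col (sub t p)"
    and "black_count (Node (sub t p) y) = black_count (sub t p)"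
    using black_count_black by (auto split: if_splits)
  then show ?thesis
    using repl_cong_col_black_count[of "Node (sub t p) y" "sub t p" t p] by simp
next
  case False
  have "black_count t \<le> black_count (sub t p) + black_count (repl t p (Leaf False))"
    using black_count_repl_le[OF assms, of "sub t p"] by simp
  also have "\<dots> \<le> black_count (Node (sub t p) y) + black_count (repl t p (Leaf False))"
    using False by (auto split: if_splits)
  also have "\<dots> = black_count (repl t p (Node (sub t p) y))"
    using black_count_repl_nonblack[OF assms False] by simp
  finally show ?thesis .
qed

lemma shift_ancestor: "prefix q a \<Longrightarrow> shift (a @ [b]) q = q"
  using prefix_length_le[of q a] prefix_length_le[of "a @ [\<not> b]" q] by (auto simp: shift_def)

lemma shift_cases:
  assumes "\<not> prefix q a" "\<not> prefix (a @ [b]) q"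
  obtains (below_sibling) r where "q = a @ [\<not> b] @ r" "shift (a @ [b]) q = a @ r"
    | (disjoint) "\<not> prefix a q" "shift (a @ [b]) q = q"
proof (cases "prefix (a @ [\<not> b]) q")
  case True
  then obtain r where "q = a @ [\<not> b] @ r" by (auto simp: prefix_def)
  then show ?thesis by (intro below_sibling) (simp_all add: shift_def)
next
  case False
  have "\<not> prefix a q"
  proof
    assume "prefix a q"
    then obtain zs where q: "q = a @ zs" by (auto simp: prefix_def)
    with assms(1) obtain c zs' where "zs = c # zs'" by (cases zs) auto
    with q assms(2) False show False by (cases c; cases b) auto
  qed
  with False show ?thesis by (intro disjoint) (simp_all add: shift_def)
qed

lemma shift_in_positions_prune:
  assumes "a @ [b] \<in> positions t" "q \<in> positions t" "\<not> prefix q a" "\<not> prefix (a @ [b]) q"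
  shows "shift (a @ [b]) q \<in> positions (prune t (a @ [b]))"
  using assms(3,4)
proof (cases rule: shift_cases)
  case (below_sibling r)
  have "a \<in> positions t" using assms(1) positions_append by blast
  with below_sibling assms(2) show ?thesis
    using positions_append[of "a @ [\<not> b]" r t] by (simp add: prune_def positions_repl_append)
next
  case disjoint
  with assms(2,3) show ?thesis by (simp add: prune_def positions_repl_disjoint)
qed

lemma sub_prune_shift:
  assumes "a @ [b] \<in> positions t" "\<not> prefix q a" "\<not> prefix (a @ [b]) q"
  shows "sub (prune t (a @ [b])) (shift (a @ [b]) q) = sub t q"
  using assms(2,3)
proof (cases rule: shift_cases)
  case (below_sibling r)
  have "a \<in> positions t" using assms(1) positions_append by blast
  with below_sibling show ?thesis
    using sub_append[of t "a @ [\<not> b]" r] by (simp add: prune_def sub_repl_append)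
next
  case disjoint
  with assms(2) show ?thesis by (simp add: prune_def sub_repl_disjoint)
qed

lemma shift_snoc:
  assumes "\<not> prefix c a"
  shows "shift (a @ [b]) (c @ [d]) = shift (a @ [b]) c @ [d]"
proof (cases "prefix (a @ [\<not> b]) c")
  case True
  then obtain r where "c = a @ [\<not> b] @ r" by (auto simp: prefix_def)
  then show ?thesis by (simp add: shift_def)
next
  case False
  with assms show ?thesis by (auto simp: shift_def)
qed

lemma black_count_eq_if_col_eq: "col x = col y \<Longrightarrow> col x \<noteq> G \<Longrightarrow> black_count x = black_count y"
  using black_count_eq_0_iff[of x] black_count_eq_0_iff[of y] black_count_black
  by (cases "col x") auto

locale spr_setup =
  fixes T :: tree and a :: "bool list" and b :: bool and v :: "bool list"
  assumes valid: "spr_valid T (a @ [b]) v"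
begin

abbreviation moved where "moved \<equiv> sub T (a @ [b])"
abbreviation sibling where "sibling \<equiv> sub T (a @ [\<not> b])"
abbreviation rest where "rest \<equiv> prune T (a @ [b])"
abbreviation v' where "v' \<equiv> shift (a @ [b]) v"
abbreviation target where "target \<equiv> sub rest v'"

lemma u_in_positions: "a @ [b] \<in> positions T"
  and v_in_positions: "v \<in> positions T"
  and not_prefix_u_v: "\<not> prefix (a @ [b]) v"
  using valid by (auto simp: spr_valid_def)

lemma a_in_positions: "a \<in> positions T"
  using u_in_positions positions_append by blast

lemma rest_eq: "rest = repl T a sibling"
  by (simp add: prune_def)

lemma sub_rest_a: "sub rest a = sibling"
  using sub_repl_append[OF a_in_positions, of sibling "[]"] by (simp add: rest_eq)

lemma black_count_parent_le: "black_count (sub T a) \<le> black_count sibling + black_count moved"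
proof (rule sub_parent[OF u_in_positions])
  fix l r
  assume "sub T a = Node l r" "moved = (if b then r else l)" "sibling = (if b then l else r)"
  then show ?thesis using black_count_Node_le[of l r] by (cases b) auto
qed

lemma col_parent_black: "col moved = B \<Longrightarrow> col sibling = B \<Longrightarrow> col (sub T a) = B"
  by (rule sub_parent[OF u_in_positions]) (cases b; simp)

lemma spr_eq: "spr T (a @ [b]) v = repl rest v' (Node target moved)"
  by (simp add: spr_def Let_def)

lemma v'_in_positions: "v' \<in> positions rest"
proof (cases "prefix v a")
  case True
  then obtain r where "a = v @ r" by (auto simp: prefix_def)
  moreover have "a \<in> positions rest"
    using positions_repl_append[OF a_in_positions, of "[]" sibling] by (simp add: rest_eq)
  ultimately show ?thesis using True shift_ancestor positions_append by metis
next
  case False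
  then show ?thesis
    using shift_in_positions_prune[OF u_in_positions v_in_positions _ not_prefix_u_v] by simp
qed

lemma black_count_rest_le_spr: "black_count rest \<le> black_count (spr T (a @ [b]) v)"
  unfolding spr_eq by (rule black_count_le_graft[OF v'_in_positions])

lemma black_count_spr_ge:
  assumes "col (Node target moved) \<noteq> B"
  shows "black_count rest + black_count moved \<le> black_count (spr T (a @ [b]) v)"
proof -
  have "black_count rest \<le> black_count target + black_count (repl rest v' (Leaf False))"
    using black_count_repl_le[OF v'_in_positions, of target] by simp
  moreover have "black_count (spr T (a @ [b]) v)
      = black_count (Node target moved) + black_count (repl rest v' (Leaf False))"
    unfolding spr_eq by (rule black_count_repl_nonblack[OF v'_in_positions assms])
  ultimately show ?thesis using assms by (auto split: if_splits)
qed

lemma black_count_le_moved_if_rest_white: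
  assumes "col rest = W"
  shows "black_count T \<le> black_count moved"
proof -
  have "col sibling = W" using assms col_sub_eq[of rest a] sub_rest_a by simp
  then have "black_count (repl T a (Leaf False)) = black_count rest"
    using repl_cong_col_black_count[of "Leaf False" sibling T a] black_count_eq_0_iff
    by (simp add: rest_eq)
  with assms have "black_count (repl T a (Leaf False)) = 0" by (simp add: black_count_eq_0_iff)
  then have "black_count T \<le> black_count (sub T a)"
    using black_count_repl_le[OF a_in_positions, of "sub T a"] by simp
  also have "\<dots> \<le> black_count sibling + black_count moved"
    by (rule black_count_parent_le)
  finally show ?thesis using \<open>col sibling = W\<close> black_count_eq_0_iff[of sibling] by simp
qed

lemma black_count_rest_eq_if_not_root:
  assumes "col moved \<noteq> G" and "kind_of T (a @ [b]) \<noteq> R"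
  shows "black_count rest = black_count T"
proof -
  obtain q where q: "strict_prefix q (a @ [b])" "col (sub T q) = col moved"
    using assms unfolding kind_of_def by (auto split: if_splits)
  then have "prefix q a" by (auto simp: strict_prefix_def prefix_snoc)
  then obtain r where "a = q @ r" by (auto simp: prefix_def)
  with q assms(1) have col_a: "col (sub T a) = col moved"
    using col_sub_eq[of "sub T q" r] sub_append[of T q r] by simp
  with assms(1) have col_sibling: "col sibling = col (sub T a)"
    using col_sub_eq[of "sub T a" "[\<not> b]"] sub_append[of T a "[\<not> b]"] by metis
  with col_a assms(1) have "black_count sibling = black_count (sub T a)"
    by (intro black_count_eq_if_col_eq) auto
  with col_sibling show ?thesis
    using repl_cong_col_black_count[of sibling "sub T a" T a] by (simp add: rest_eq)
qed

lemma col_sub_v_if_target_black: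
  assumes "col target = B" and "col moved = B"
  shows "col (sub T v) = B"
proof (cases "prefix v a")
  case True
  then obtain r where a: "a = v @ r" by (auto simp: prefix_def)
  have r: "r \<in> positions (sub T v)" using a_in_positions a positions_append by blast
  have "target = sub (repl T a sibling) v"
    using shift_ancestor[OF True] by (simp add: rest_eq)
  also have "\<dots> = repl (sub T v) r sibling"
    using a a_in_positions sub_repl_prefix[of v r T sibling] by metis
  finally have target: "target = repl (sub T v) r sibling" .
  then have "col sibling = B"
    using assms(1) col_sub_eq[of target r] sub_repl_append[OF r, of sibling "[]"] by simp
  with assms(2) have "col (sub T a) = B" by (rule col_parent_black)
  with \<open>col sibling = B\<close> have "col (repl (sub T v) r (sub T a)) = col target"
    using target repl_cong_col_black_count[of "sub T a" sibling "sub T v" r] black_count_black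
    by simp
  moreover have "repl (sub T v) r (sub T a) = sub T v" using a by (simp add: sub_append)
  ultimately show ?thesis using assms(1) by simp
next
  case False
  then show ?thesis
    using assms(1) sub_prune_shift[OF u_in_positions _ not_prefix_u_v] by simp
qed

lemma two_le_black_count_spr:
  assumes "col moved = W" and "col (sub T v) = B" and "kind_of T v \<noteq> R"
  shows "2 \<le> black_count (spr T (a @ [b]) v)"
proof -
  obtain q where q: "strict_prefix q v" "col (sub T q) = B"
    using assms(2,3) unfolding kind_of_def by (auto split: if_splits)
  then obtain c d where v: "v = c @ [d]" by (cases v rule: rev_cases) auto
  with q have "prefix q c" by (auto simp: strict_prefix_def prefix_snoc)
  then obtain r where "c = q @ r" by (auto simp: prefix_def)
  with q(2) have c_black: "col (sub T c) = B"
    using col_sub_eq[of "sub T q" r] sub_append[of T q r] by simp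
  have not_above_a: "\<not> prefix w a" if "col (sub T w) = B" for w
  proof
    assume "prefix w a"
    then obtain r where "a = w @ r" by (auto simp: prefix_def)
    then have "moved = sub (sub T w) (r @ [b])" by (simp add: sub_append)
    with that assms(1) show False using col_sub_eq[of "sub T w" "r @ [b]"] by simp
  qed
  have c_pos: "c \<in> positions T" using v_in_positions v positions_append by blast
  have "\<not> prefix (a @ [b]) c" using not_prefix_u_v v by (auto simp: prefix_def)
  then have sub_rest_c: "sub rest (shift (a @ [b]) c) = sub T c"
    using sub_prune_shift[OF u_in_positions not_above_a[OF c_black]] by simp
  have target: "target = sub T v"
    using sub_prune_shift[OF u_in_positions not_above_a[OF assms(2)] not_prefix_u_v] .
  have v': "v' = shift (a @ [b]) c @ [d]"
    using shift_snoc[OF not_above_a[OF c_black]] v by simp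
  obtain l r where lr: "sub T c = Node l r" using c_pos v v_in_positions
    by (cases "sub T c") (auto simp: positions_append)
  with c_black have "col l = B" "col r = B" by (auto split: if_splits)
  moreover have "sub T v = (if d then r else l)" using lr v by (simp add: sub_append)
  moreover have
    "sub (spr T (a @ [b]) v) (shift (a @ [b]) c) = repl (Node l r) [d] (Node target moved)"
    using sub_repl_prefix[of "shift (a @ [b]) c" "[d]" rest] v'_in_positions v' sub_rest_c lr
    by (simp add: spr_eq)
  ultimately have "black_count (sub (spr T (a @ [b]) v) (shift (a @ [b]) c)) = 2"
    using assms(1,2) target black_count_black black_count_eq_0_iff[of moved] by (cases d) auto
  then show ?thesis using black_count_sub_le by metis
qed

end

locale compatible_spr = spr_setup +
  assumes several_black: "2 \<le> black_count T"
    and spr_compatible: "black_count (spr T (a @ [b]) v) \<le> 1"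
begin

lemma graft_black_or_moved_white: "col (Node target moved) = B \<or> col moved = W"
proof (rule ccontr)
  assume "\<not> ?thesis"
  then have "col (Node target moved) \<noteq> B" and "1 \<le> black_count moved"
    using black_count_eq_0_iff[of moved] by auto
  then have "black_count rest = 0" and "black_count moved \<le> 1"
    using black_count_spr_ge spr_compatible by auto
  then have "black_count T \<le> 1"
    using black_count_le_moved_if_rest_white black_count_eq_0_iff by fastforce
  with several_black show False by simp
qed

lemma moved_not_grey: "col moved \<noteq> G"
  using graft_black_or_moved_white by (auto split: if_splits)

lemma kind_of_moved: "kind_of T (a @ [b]) = R"
  using black_count_rest_eq_if_not_root[OF moved_not_grey] black_count_rest_le_spr
    several_black spr_compatible by fastforce

lemma col_v_if_moved_black: "col moved = B \<Longrightarrow> col (sub T v) = B"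
  using graft_black_or_moved_white col_sub_v_if_target_black by (auto split: if_splits)

lemma kind_of_v_if_moved_white: "col moved = W \<Longrightarrow> col (sub T v) = B \<Longrightarrow> kind_of T v = R"
  using two_le_black_count_spr spr_compatible by fastforce

end

theorem theorem1:
  fixes T :: tree and u v :: "bool list"
  assumes "card (max_black T) > 1"
    and "spr_valid T u v"
    and "compatible (spr T u v)"
  shows "(\<exists>y. spr_class T u v = (B, R, B, y)) \<or> (\<exists>y. spr_class T u v = (W, R, W, y))
       \<or> (\<exists>y. spr_class T u v = (W, R, G, y)) \<or> spr_class T u v = (W, R, B, R)"
proof -
  obtain a b where u: "u = a @ [b]"
    using assms(2) unfolding spr_valid_def by (metis append_butlast_last_id)
  interpret compatible_spr T a b v
    using assms by unfold_locales (simp_all add: u compatible_def card_max_black)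
  show ?thesis
    using kind_of_moved moved_not_grey col_v_if_moved_black kind_of_v_if_moved_white
    by (cases "col (sub T u)"; cases "col (sub T v)") (auto simp: spr_class_def u)
qed

end
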